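(* Let $x_1,x_2,x_3,x_4\in\mathbb{Z}^3$ be the vertices of a Fano tetrahedron, and let $\lambda_1\le\lambda_2\le\lambda_3\le\lambda_4$ be non-negative integers with $\gcd(\lambda_1,\ldots,\lambda_4)=1$ and $\sum_i\lambda_ix_i=0$. Then there exist $g\in GL(3,\mathbb{Z})$, integers $a,b$ with $a>0$ and $a\lambda_3+b\lambda_4=1$, and $k,k',k''\in\mathbb{N}$ with $$0\le k''\lambda_4-a\lambda_1<k\lambda_4,\qquad 0\le k'\lambda_4-a\lambda_2<k\lambda_4,$$ such that $gx_1=(1,0,0)$, $gx_2=(0,1,0)$, $gx_3=(k''\lambda_4-a\lambda_1,\ k'\lambda_4-a\lambda_2,\ k\lambda_4)$ and $gx_4=(-k''\lambda_3-b\lambda_1,\ -k'\lambda_3-b\lambda_2,\ -k\lambda_3)$. Moreover, one of the two lower inequalities above can be an equality (i.e. $k''\lambda_4-a\lambda_1=0$ or $k'\lambda_4-a\lambda_2=0$) only if $\lambda_4=1$.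
   Context: A tetrahedron is called Fano if its vertices lie in $\mathbb{Z}^3$ and the only lattice point it contains other than its vertices is the origin, which lies strictly in its interior. *)

theory Defs
  imports "HOL-Analysis.Analysis"
begin

definition rvec :: "int^3 \<Rightarrow> real^3" where
  "rvec x = (\<chi> i. real_of_int (x $ i))"

definition fano_tetrahedron :: "int^3 \<Rightarrow> int^3 \<Rightarrow> int^3 \<Rightarrow> int^3 \<Rightarrow> bool" where
  "fano_tetrahedron x1 x2 x3 x4 \<longleftrightarrow>
     card {x1, x2, x3, x4} = 4 \<and>
     \<not> affine_dependent (rvec ` {x1, x2, x3, x4}) \<and>
     (\<forall>z::int^3. rvec z \<in> convex hull (rvec ` {x1, x2, x3, x4}) \<longleftrightarrow> z \<in> {x1, x2, x3, x4, 0}) \<and>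
     (0::real^3) \<in> interior (convex hull (rvec ` {x1, x2, x3, x4}))"

end

theory Submission
  imports Defs
begin

text \<open>
As 0 is an interior point, no three vertices lie in a plane through 0; in particular
det(x1, x2, x3) \<noteq> 0 and l1 > 0.  The face with vertices 0, x1, x2 contains no further lattice
points, and this forces x1, x2 to extend to a basis of the lattice: a common divisor p > 1 of the
entries of c = x1 \<times> x2 would give a lattice point z = (g x1 + d x2) / p with 0 \<le> g, d < p, not both 0,
and either z or its reflection x1 + x2 - z lies in the face.  Choosing w with c \<cdot> w = 1, the
matrix with rows x2 \<times> w, w \<times> x1, c sends x1, x2 to e1, e2 and x3 to a vector with last entry
det(x1, x2, x3); a shear fixing e1, e2 reduces the first two entries modulo its absolute value.

In these coordinates the relation reads l1 + l3 P + l4 S = 0, l2 + l3 Q + l4 T = 0 and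
l3 K + l4 U = 0, so gcd(l3, l4) divides every weight.  For a l3 + b l4 = 1 each relation
l + l3 X + l4 Y = 0 is solved by X = j l4 - a l, Y = - j l3 - b l with j = b X - a Y, which is
exactly the claimed shape of g x3 and g x4.  If P or Q vanishes, l4 divides l1 or l2, which forces
l2 = l3 = l4 and then l4 divides all weights.
\<close>

section \<open>Dot and cross products\<close>

definition dot :: "'a::comm_ring_1^'n \<Rightarrow> 'a^'n \<Rightarrow> 'a" where
  "dot u v = (\<Sum>i\<in>UNIV. u $ i * v $ i)"

definition cross :: "'a::comm_ring_1^3 \<Rightarrow> 'a^3 \<Rightarrow> 'a^3" where
  "cross u v = vector [u$2 * v$3 - u$3 * v$2, u$3 * v$1 - u$1 * v$3, u$1 * v$2 - u$2 * v$1]"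

lemma dot_3:
  fixes u v :: "'a::comm_ring_1^3"
  shows "dot u v = u$1 * v$1 + u$2 * v$2 + u$3 * v$3"
  by (simp add: dot_def sum_3)

lemma cross_nth [simp]:
  "cross u v $ 1 = u$2 * v$3 - u$3 * v$2"
  "cross u v $ 2 = u$3 * v$1 - u$1 * v$3"
  "cross u v $ 3 = u$1 * v$2 - u$2 * v$1"
  by (simp_all add: cross_def)

lemma matrix_vector_mult_nth_dot: "(A *v x) $ i = dot (A $ i) x"
  by (simp add: matrix_vector_mult_def dot_def)

lemma dot_add_right [simp]: "dot u (x + y) = dot u x + dot u y"
  and dot_smult_right [simp]: "dot u (k *s x) = k * dot u x"
  and dot_zero_left [simp]: "dot 0 x = 0"
  and dot_zero_right [simp]: "dot u 0 = 0"
  by (simp_all add: dot_def algebra_simps sum.distrib sum_distrib_left)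

lemma matrix_vector_mult_smult:
  fixes A :: "'a::comm_ring_1^'n^'m"
  shows "A *v (c *s x) = c *s (A *v x)"
  by (simp add: vec_eq_iff matrix_vector_mult_nth_dot)

lemma cross_add_left [simp]: "cross (u + v) w = cross u w + cross v w"
  and cross_add_right [simp]: "cross u (v + w) = cross u v + cross u w"
  and cross_smult_left [simp]: "cross (k *s u) v = k *s cross u v"
  and cross_smult_right [simp]: "cross u (k *s v) = k *s cross u v"
  and cross_same [simp]: "cross u u = 0"
  and cross_zero_left [simp]: "cross 0 u = 0"
  and cross_zero_right [simp]: "cross u 0 = 0"
  by (simp_all add: vec_eq_iff forall_3 algebra_simps)

lemma dot_cross_orthogonal [simp]: "dot (cross u v) u = 0" "dot (cross u v) v = 0"
  by (simp_all add: dot_3 algebra_simps)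

lemma dot_cross_cycle: "dot (cross v w) u = dot (cross u v) w" "dot (cross w u) v = dot (cross u v) w"
  by (simp_all add: dot_3 algebra_simps)

lemma vector_mul_rcancel_idom:
  "x \<noteq> 0 \<Longrightarrow> a *s x = b *s x \<longleftrightarrow> a = (b::'a::idom)"
  by (metis eq_iff_diff_eq_0 vector_mul_eq_0 vector_sub_rdistrib)

lemma cross_adjugate:
  "u$i * cross v w $ j + v$i * cross w u $ j + w$i * cross u v $ j =
     (if i = j then dot (cross u v) w else 0)"
  using exhaust_3[of i] exhaust_3[of j] by (auto simp: dot_3 algebra_simps)

lemma invertible_cross_matrix:
  fixes u v w :: "'a::comm_ring_1^3"
  assumes "dot (cross u v) w = 1"
  shows "invertible (vector [cross v w, cross w u, cross u v] :: 'a^3^3)" (is "invertible ?M")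
proof -
  let ?N = "transpose (vector [u, v, w]) :: 'a^3^3"
  have "?M ** ?N = mat 1"
    using assms by (simp add: vec_eq_iff forall_3 matrix_matrix_mult_def transpose_def sum_3 mat_def dot_3 algebra_simps)
  moreover have "?N ** ?M = mat 1"
    using assms cross_adjugate[of u _ v w]
    by (simp add: vec_eq_iff matrix_matrix_mult_def transpose_def sum_3 mat_def algebra_simps)
  ultimately show ?thesis
    unfolding invertible_def by blast
qed

section \<open>Lattice points of a Fano tetrahedron\<close>

lemma rvec_nth [simp]: "rvec z $ i = of_int (z $ i)"
  by (simp add: rvec_def)

lemma inner_rvec: "rvec m \<bullet> rvec z = of_int (dot m z)"
  by (simp add: inner_vec_def dot_def)

lemma interior_convex_hull_obtains_neg_inner:
  fixes n :: "'a::euclidean_space"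
  assumes "0 \<in> interior (convex hull S)" "n \<noteq> 0"
  obtains y where "y \<in> S" "n \<bullet> y < 0"
proof -
  have "\<not> convex hull S \<subseteq> {y. n \<bullet> y \<ge> 0}"
  proof
    assume "convex hull S \<subseteq> {y. n \<bullet> y \<ge> 0}"
    then have "interior (convex hull S) \<subseteq> {y. n \<bullet> y > 0}"
      using interior_mono interior_halfspace_ge[OF assms(2)] by blast
    then show False
      using assms(1) by auto
  qed
  then have "\<not> S \<subseteq> {y. n \<bullet> y \<ge> 0}"
    using hull_minimal convex_halfspace_ge by blast
  then show thesis
    using that by force
qed

lemma dot_cross_neq_0_if_zero_in_interior:
  assumes "0 \<in> interior (convex hull (rvec ` {x1, x2, x3, x4}))"
  shows "dot (cross x1 x2) x3 \<noteq> 0"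
proof
  assume "dot (cross x1 x2) x3 = 0"
  moreover define A :: "real^3^3" where "A = vector [rvec x1, rvec x2, rvec x3]"
  ultimately have "det A = 0"
    by (simp add: A_def det_3 dot_3 algebra_simps flip: of_int_mult of_int_diff of_int_add)
  then obtain n where n: "A *v n = 0" "n \<noteq> 0"
    using invertible_det_nz invertible_left_inverse matrix_left_invertible_ker by blast
  have "n \<bullet> rvec x1 = 0" "n \<bullet> rvec x2 = 0" "n \<bullet> rvec x3 = 0"
    using n(1) by (simp_all add: vec_eq_iff forall_3 matrix_vector_mul_component A_def inner_commute)
  \<comment> \<open>both n and -n must be negative somewhere on the vertices, hence both on x4\<close>
  moreover obtain y where "y \<in> rvec ` {x1, x2, x3, x4}" "n \<bullet> y < 0"
    using interior_convex_hull_obtains_neg_inner[OF assms n(2)] .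
  moreover obtain y' where "y' \<in> rvec ` {x1, x2, x3, x4}" "(- n) \<bullet> y' < 0"
    using interior_convex_hull_obtains_neg_inner[OF assms] n(2) neg_equal_0_iff_equal by blast
  ultimately show False
    by auto
qed

lemma dot_cross_eq_0_on_triangle:
  assumes "rvec z \<in> convex hull {0, rvec x1, rvec x2}"
  shows "dot (cross x1 x2) z = 0"
proof -
  have "convex hull {0, rvec x1, rvec x2} \<subseteq> {y. rvec (cross x1 x2) \<bullet> y = 0}"
    by (rule hull_minimal) (auto simp: inner_rvec dot_cross_cycle convex_hyperplane)
  then show ?thesis
    using assms by (auto simp: inner_rvec)
qed

lemma lattice_point_in_triangle:
  fixes z x1 x2 :: "int^3"
  assumes "p *s z = g *s x1 + d *s x2" "0 < p" "0 \<le> g" "0 \<le> d" "g + d \<le> p"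
  shows "rvec z \<in> convex hull {0, rvec x1, rvec x2}"
proof -
  have "rvec z = (of_int g / of_int p) *\<^sub>R rvec x1 + (of_int d / of_int p) *\<^sub>R rvec x2"
  proof -
    have "real_of_int p * of_int (z$i) = of_int g * of_int (x1$i) + of_int d * of_int (x2$i)" for i
      using arg_cong[OF assms(1), of "\<lambda>v. of_int (v$i) :: real"] by simp
    then show ?thesis
      using assms(2) by (simp add: vec_eq_iff field_simps)
  qed
  moreover have "0 \<le> of_int g / (of_int p :: real)" "0 \<le> of_int d / (of_int p :: real)"
    "of_int g / of_int p + of_int d / (of_int p :: real) \<le> 1"
    using assms(2-5) by (simp_all add: field_simps)
  ultimately show ?thesis
    unfolding convex_hull_3
    by (intro CollectI exI[of _ "1 - of_int g / of_int p - of_int d / of_int p"]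
        exI[of _ "of_int g / of_int p"] exI[of _ "of_int d / of_int p"]) auto
qed

lemma triangle_vertex_coefficients:
  fixes z x1 x2 :: "int^3"
  assumes "cross x1 x2 \<noteq> 0" "p *s z = g *s x1 + d *s x2" "z \<in> {0, x1, x2}"
  shows "(g = 0 \<and> d = 0) \<or> (g = p \<and> d = 0) \<or> (g = 0 \<and> d = p)"
proof -
  have "p *s cross z x2 = g *s cross x1 x2" "p *s cross x1 z = d *s cross x1 x2"
    using arg_cong[OF assms(2), of "\<lambda>v. cross v x2"] arg_cong[OF assms(2), of "\<lambda>v. cross x1 v"]
    by simp_all
  with assms(1,3) show ?thesis
    by (auto simp: vector_mul_rcancel_idom[OF assms(1)])
qed

lemma empty_triangle_parallelogram_trivial:
  fixes z x1 x2 :: "int^3"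
  assumes empty: "\<And>z. rvec z \<in> convex hull {0, rvec x1, rvec x2} \<Longrightarrow> z \<in> {0, x1, x2}"
    and c: "cross x1 x2 \<noteq> 0"
    and z: "p *s z = g *s x1 + d *s x2" and "0 \<le> g" "g < p" "0 \<le> d" "d < p"
  shows "g = 0 \<and> d = 0"
proof (cases "g + d \<le> p")
  case True
  then have "z \<in> {0, x1, x2}"
    using empty lattice_point_in_triangle[OF z] assms(4-7) by simp
  then show ?thesis
    using triangle_vertex_coefficients[OF c z] assms(4-7) by auto
next
  case False
  have z': "p *s (x1 + x2 - z) = (p - g) *s x1 + (p - d) *s x2"
    using z by (simp add: vec_eq_iff algebra_simps)
  have "x1 + x2 - z \<in> {0, x1, x2}"
    by (rule empty, rule lattice_point_in_triangle[OF z']) (use False assms(4-7) in auto)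
  then show ?thesis
    using triangle_vertex_coefficients[OF c z'] False assms(4-7) by auto
qed

lemma dvd_minor_if_dvd_cross:
  fixes u v :: "'a::comm_ring_1^3"
  assumes "\<And>k. p dvd cross u v $ k"
  shows "p dvd u$i * v$j - u$j * v$i"
proof -
  have dvd_swap: "p dvd b - a" if "p dvd a - b" for a b
    using that by (metis dvd_minus_iff minus_diff_eq)
  show ?thesis
    using exhaust_3[of i] exhaust_3[of j] assms[of 1] assms[of 2] assms[of 3]
    by (auto intro: dvd_swap)
qed

lemma empty_triangle_imp_primitive_cross:
  fixes x1 x2 :: "int^3"
  assumes empty: "\<And>z. rvec z \<in> convex hull {0, rvec x1, rvec x2} \<Longrightarrow> z \<in> {0, x1, x2}"
    and c: "cross x1 x2 \<noteq> 0"
  shows "gcd (cross x1 x2 $ 1) (gcd (cross x1 x2 $ 2) (cross x1 x2 $ 3)) = 1"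
proof (rule ccontr)
  define p where "p = gcd (cross x1 x2 $ 1) (gcd (cross x1 x2 $ 2) (cross x1 x2 $ 3))"
  assume "\<not> ?thesis"
  then have "p \<noteq> 1"
    by (simp add: p_def)
  moreover have "p \<noteq> 0"
    using c by (auto simp: p_def vec_eq_iff forall_3)
  moreover have "p \<ge> 0"
    by (simp add: p_def)
  ultimately have p: "p > 1"
    by linarith
  have p_dvd_cross: "p dvd cross x1 x2 $ k" for k
    using exhaust_3[of k] by (auto simp: p_def intro: dvd_trans simp del: cross_nth)
  obtain \<alpha> \<beta> where nontrivial: "\<not> (p dvd \<alpha> \<and> p dvd \<beta>)"
    and dvd_comb: "\<And>j. p dvd \<alpha> * x1$j + \<beta> * x2$j"
  proof (cases "\<forall>j. p dvd x1$j")
    case True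
    then show ?thesis
      using that[of 1 0] p by (simp add: zdvd_not_zless)
  next
    case False
    then obtain i where "\<not> p dvd x1$i"
      by blast
    then show ?thesis
      using that[of "x2$i" "- x1$i"] dvd_minor_if_dvd_cross[OF p_dvd_cross]
      by (simp add: mult.commute)
  qed
  define g d where "g = \<alpha> mod p" and "d = \<beta> mod p"
  have "p dvd g * x1$j + d * x2$j" for j
  proof -
    have "g * x1$j + d * x2$j = (\<alpha> * x1$j + \<beta> * x2$j) - p * ((\<alpha> div p) * x1$j + (\<beta> div p) * x2$j)"
      by (simp add: g_def d_def algebra_simps minus_div_mult_eq_mod[symmetric])
    then show ?thesis
      using dvd_comb[of j] by simp
  qed
  then have "p *s (\<chi> j. (g * x1$j + d * x2$j) div p) = g *s x1 + d *s x2"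
    by (simp add: vec_eq_iff)
  then have "g = 0 \<and> d = 0"
    using empty_triangle_parallelogram_trivial[OF empty c] p by (simp add: g_def d_def)
  then show False
    using nontrivial by (simp add: g_def d_def dvd_eq_mod_eq_0)
qed

lemma fano_tetrahedron_empty_triangle:
  assumes "fano_tetrahedron x1 x2 x3 x4" "rvec z \<in> convex hull {0, rvec x1, rvec x2}"
  shows "z \<in> {0, x1, x2}"
proof -
  let ?S = "rvec ` {x1, x2, x3, x4}"
  have lattice: "\<And>z. rvec z \<in> convex hull ?S \<longleftrightarrow> z \<in> {x1, x2, x3, x4, 0}"
    and interior: "0 \<in> interior (convex hull ?S)"
    using assms(1) unfolding fano_tetrahedron_def by blast+
  have "convex hull {0, rvec x1, rvec x2} \<subseteq> convex hull ?S"
    using interior_subset[of "convex hull ?S"] interior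
    by (intro hull_minimal) (auto simp: hull_inc convex_convex_hull)
  then have "z \<in> {x1, x2, x3, x4, 0}"
    using assms(2) lattice by blast
  moreover have "dot (cross x1 x2) z = 0"
    using dot_cross_eq_0_on_triangle[OF assms(2)] .
  moreover have "dot (cross x1 x2) x3 \<noteq> 0" "dot (cross x1 x2) x4 \<noteq> 0"
    using dot_cross_neq_0_if_zero_in_interior[of x1 x2 x3 x4]
      dot_cross_neq_0_if_zero_in_interior[of x1 x2 x4 x3] interior
    by (simp_all add: insert_commute)
  ultimately show ?thesis
    by auto
qed

lemma fano_first_weight_pos:
  fixes l1 l2 l3 l4 :: int
  assumes "fano_tetrahedron x1 x2 x3 x4"
    and "0 \<le> l1" "l1 \<le> l2" "l2 \<le> l3" "l3 \<le> l4" "gcd l1 (gcd l2 (gcd l3 l4)) = 1"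
    and "l1 *s x1 + l2 *s x2 + l3 *s x3 + l4 *s x4 = 0"
  shows "0 < l1"
proof (rule ccontr)
  assume "\<not> 0 < l1"
  then have "l1 = 0"
    using assms(2) by linarith
  then have "l4 * dot (cross x2 x3) x4 = 0"
    using arg_cong[OF assms(7), of "dot (cross x2 x3)"] by simp
  moreover have "dot (cross x2 x3) x4 \<noteq> 0"
    using assms(1) dot_cross_neq_0_if_zero_in_interior[of x2 x3 x4 x1]
    unfolding fano_tetrahedron_def by (simp add: insert_commute)
  ultimately have "l4 = 0"
    by simp
  with \<open>l1 = 0\<close> have "l2 = 0" "l3 = 0"
    using assms(3-5) by linarith+
  with \<open>l1 = 0\<close> \<open>l4 = 0\<close> show False
    using assms(6) by simp
qed

section \<open>A unimodular normal form\<close>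

lemma primitive_vector_obtains_dual:
  fixes c :: "int^3"
  assumes "gcd (c $ 1) (gcd (c $ 2) (c $ 3)) = 1"
  obtains w where "dot c w = 1"
proof -
  obtain s t where st: "s * c $ 1 + t * gcd (c $ 2) (c $ 3) = 1"
    using bezout_int[of "c $ 1"] assms by metis
  obtain u v where uv: "u * c $ 2 + v * c $ 3 = gcd (c $ 2) (c $ 3)"
    using bezout_int by blast
  have "dot c (vector [s, t * u, t * v]) = s * c $ 1 + t * (u * c $ 2 + v * c $ 3)"
    by (simp add: dot_3 algebra_simps)
  then show thesis
    using that st uv by simp
qed

lemma primitive_cross_obtains_unimodular:
  fixes x1 x2 :: "int^3"
  assumes "gcd (cross x1 x2 $ 1) (gcd (cross x1 x2 $ 2) (cross x1 x2 $ 3)) = 1"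
  obtains g :: "int^3^3" where "invertible g" "g *v x1 = vector [1, 0, 0]"
    "g *v x2 = vector [0, 1, 0]" "\<And>y. (g *v y) $ 3 = dot (cross x1 x2) y"
proof -
  obtain w where w: "dot (cross x1 x2) w = 1"
    using primitive_vector_obtains_dual[OF assms] .
  define g :: "int^3^3" where "g = vector [cross x2 w, cross w x1, cross x1 x2]"
  show thesis
  proof
    show "invertible g"
      unfolding g_def by (rule invertible_cross_matrix[OF w])
    show "g *v x1 = vector [1, 0, 0]" "g *v x2 = vector [0, 1, 0]"
      using w by (simp_all add: g_def vec_eq_iff forall_3 matrix_vector_mult_nth_dot dot_cross_cycle)
    show "(g *v y) $ 3 = dot (cross x1 x2) y" for y
      by (simp add: g_def matrix_vector_mult_nth_dot)
  qed
qed

lemma shear_reduction: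
  fixes y :: "int^3"
  assumes "y $ 3 \<noteq> 0"
  obtains E :: "int^3^3" where "invertible E"
    "E *v vector [1, 0, 0] = vector [1, 0, 0]" "E *v vector [0, 1, 0] = vector [0, 1, 0]"
    "E *v y = vector [y $ 1 mod \<bar>y $ 3\<bar>, y $ 2 mod \<bar>y $ 3\<bar>, \<bar>y $ 3\<bar>]"
proof -
  define s q1 q2 where "s = sgn (y $ 3)" and "q1 = y $ 1 div \<bar>y $ 3\<bar>" and "q2 = y $ 2 div \<bar>y $ 3\<bar>"
  have s: "s * s = 1" "s * y $ 3 = \<bar>y $ 3\<bar>"
    using assms by (simp_all add: s_def sgn_if abs_if)
  define E F :: "int^3^3"
    where "E = vector [vector [1, 0, - s * q1], vector [0, 1, - s * q2], vector [0, 0, s]]"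
      and "F = vector [vector [1, 0, q1], vector [0, 1, q2], vector [0, 0, s]]"
  have "E ** F = mat 1" "F ** E = mat 1"
    using s by (simp_all add: E_def F_def vec_eq_iff forall_3 matrix_matrix_mult_def sum_3 mat_def algebra_simps)
  then have "invertible E"
    unfolding invertible_def by blast
  moreover have "E *v y = vector [y $ 1 mod \<bar>y $ 3\<bar>, y $ 2 mod \<bar>y $ 3\<bar>, \<bar>y $ 3\<bar>]"
    using s by (simp add: E_def vec_eq_iff forall_3 matrix_vector_mult_def sum_3 q1_def q2_def
        minus_div_mult_eq_mod[symmetric] algebra_simps flip: mult.assoc)
  ultimately show thesis
    using that by (simp add: E_def vec_eq_iff forall_3 matrix_vector_mult_def sum_3)
qed

lemma fano_tetrahedron_unimodular_normal_form:
  assumes "fano_tetrahedron x1 x2 x3 x4"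
  obtains g :: "int^3^3" where "invertible g"
    "g *v x1 = vector [1, 0, 0]" "g *v x2 = vector [0, 1, 0]"
    "0 \<le> (g *v x3) $ 1" "(g *v x3) $ 1 < (g *v x3) $ 3"
    "0 \<le> (g *v x3) $ 2" "(g *v x3) $ 2 < (g *v x3) $ 3"
proof -
  have det: "dot (cross x1 x2) x3 \<noteq> 0"
    using assms dot_cross_neq_0_if_zero_in_interior unfolding fano_tetrahedron_def by blast
  then have "cross x1 x2 \<noteq> 0"
    by auto
  then have "gcd (cross x1 x2 $ 1) (gcd (cross x1 x2 $ 2) (cross x1 x2 $ 3)) = 1"
    using empty_triangle_imp_primitive_cross fano_tetrahedron_empty_triangle[OF assms] by blast
  then obtain g0 :: "int^3^3" where g0: "invertible g0" "g0 *v x1 = vector [1, 0, 0]"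
    "g0 *v x2 = vector [0, 1, 0]" "\<And>y. (g0 *v y) $ 3 = dot (cross x1 x2) y"
    by (rule primitive_cross_obtains_unimodular) blast
  then have "(g0 *v x3) $ 3 \<noteq> 0"
    using det by simp
  then obtain E :: "int^3^3" where E: "invertible E"
    "E *v vector [1, 0, 0] = vector [1, 0, 0]" "E *v vector [0, 1, 0] = vector [0, 1, 0]"
    "E *v (g0 *v x3) = vector [(g0 *v x3) $ 1 mod \<bar>(g0 *v x3) $ 3\<bar>,
       (g0 *v x3) $ 2 mod \<bar>(g0 *v x3) $ 3\<bar>, \<bar>(g0 *v x3) $ 3\<bar>]"
    by (rule shear_reduction)
  show thesis
  proof (rule that[of "E ** g0"])
    show "invertible (E ** g0)"
      using E(1) g0(1) by (rule invertible_mult)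
  qed (use E g0 det in \<open>simp_all flip: matrix_vector_mul_assoc\<close>)
qed

lemma coordinates_of_relation:
  fixes g :: "'a::comm_ring_1^3^3"
  assumes "g *v x1 = vector [1, 0, 0]" "g *v x2 = vector [0, 1, 0]"
    and "l1 *s x1 + l2 *s x2 + l3 *s x3 + l4 *s x4 = 0"
  shows "l1 + l3 * (g *v x3) $ 1 + l4 * (g *v x4) $ 1 = 0"
    "l2 + l3 * (g *v x3) $ 2 + l4 * (g *v x4) $ 2 = 0"
    "l3 * (g *v x3) $ 3 + l4 * (g *v x4) $ 3 = 0"
proof -
  have "g *v (l1 *s x1 + l2 *s x2 + l3 *s x3 + l4 *s x4) = 0"
    using assms(3) by simp
  then show "l1 + l3 * (g *v x3) $ 1 + l4 * (g *v x4) $ 1 = 0"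
    "l2 + l3 * (g *v x3) $ 2 + l4 * (g *v x4) $ 2 = 0"
    "l3 * (g *v x3) $ 3 + l4 * (g *v x4) $ 3 = 0"
    by (simp_all add: matrix_vector_right_distrib matrix_vector_mult_smult assms(1,2) vec_eq_iff forall_3)
qed

section \<open>Solving for the coordinates\<close>

lemma coprime_of_weight_relations:
  fixes l1 l2 l3 l4 P Q S T :: int
  assumes "gcd l1 (gcd l2 (gcd l3 l4)) = 1"
    and "l1 + l3 * P + l4 * S = 0" "l2 + l3 * Q + l4 * T = 0"
  shows "coprime l3 l4"
proof -
  have "l1 = - (l3 * P + l4 * S)" "l2 = - (l3 * Q + l4 * T)"
    using assms(2,3) by linarith+
  then have "gcd l3 l4 dvd gcd l1 (gcd l2 (gcd l3 l4))"
    by simp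
  then show ?thesis
    using assms(1) by (simp add: coprime_iff_gcd_eq_1)
qed

lemma bezout_int_pos_coeff:
  fixes x y :: int
  assumes "coprime x y" "y > 0"
  obtains a b where "a > 0" "a * x + b * y = 1"
proof -
  obtain a0 b0 where ab0: "a0 * x + b0 * y = 1"
    using bezout_int[of x y] assms(1) by (auto simp: coprime_iff_gcd_eq_1)
  have "\<bar>a0\<bar> + 1 \<le> (\<bar>a0\<bar> + 1) * y"
    using assms(2) mult_left_mono[of 1 y "\<bar>a0\<bar> + 1"] by simp
  then have "a0 + (\<bar>a0\<bar> + 1) * y > 0"
    using abs_ge_minus_self[of a0] by linarith
  moreover have "(a0 + (\<bar>a0\<bar> + 1) * y) * x + (b0 - (\<bar>a0\<bar> + 1) * x) * y = 1"
    using ab0 by (simp add: algebra_simps)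
  ultimately show thesis
    by (rule that)
qed

lemma bezout_coordinates:
  fixes a b l3 l4 l P S :: "'a::comm_ring_1"
  assumes "a * l3 + b * l4 = 1" "l + l3 * P + l4 * S = 0"
  shows "P = (b * P - a * S) * l4 - a * l" "S = - (b * P - a * S) * l3 - b * l"
proof -
  have l: "l = - (l3 * P + l4 * S)"
    using assms(2) by (subst eq_neg_iff_add_eq_0) (simp only: add.assoc)
  have "(b * P - a * S) * l4 - a * l = P * (a * l3 + b * l4)"
    "- (b * P - a * S) * l3 - b * l = S * (a * l3 + b * l4)"
    unfolding l by (simp_all add: algebra_simps)
  then show "P = (b * P - a * S) * l4 - a * l" "S = - (b * P - a * S) * l3 - b * l"
    using assms(1) by simp_all
qed

lemma last_weight_eq_1:
  fixes l1 l2 l3 l4 P S :: int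
  assumes "0 < l1" "l1 \<le> l2" "l2 \<le> l3" "l3 \<le> l4" "gcd l1 (gcd l2 (gcd l3 l4)) = 1"
    and "l1 + l3 * P + l4 * S = 0" "l4 dvd l1 \<or> l4 dvd l2"
  shows "l4 = 1"
proof -
  have "l4 \<le> l2"
  proof (cases "l4 dvd l1")
    case True
    then show ?thesis
      using zdvd_imp_le[OF True assms(1)] assms(2) by linarith
  next
    case False
    then show ?thesis
      using assms(1,2,7) zdvd_imp_le[of l4 l2] by simp
  qed
  then have "l2 = l4" "l3 = l4"
    using assms(3,4) by linarith+
  have "l1 = - (l3 * P + l4 * S)"
    using assms(6) by (subst eq_neg_iff_add_eq_0) (simp only: add.assoc)
  also have "\<dots> = l4 * (- P - S)"
    using \<open>l3 = l4\<close> by (simp add: algebra_simps)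
  finally have "l4 dvd l1"
    by (metis dvd_triv_left)
  with \<open>l2 = l4\<close> \<open>l3 = l4\<close> have "l4 dvd gcd l1 (gcd l2 (gcd l3 l4))"
    by simp
  then show ?thesis
    using assms(1-5) by simp
qed

lemma weight_normal_form:
  fixes l1 l2 l3 l4 P Q K S T U :: int
  assumes order: "0 < l1" "l1 \<le> l2" "l2 \<le> l3" "l3 \<le> l4"
    and gcd: "gcd l1 (gcd l2 (gcd l3 l4)) = 1"
    and rel: "l1 + l3 * P + l4 * S = 0" "l2 + l3 * Q + l4 * T = 0" "l3 * K + l4 * U = 0"
    and bounds: "0 \<le> P" "P < K" "0 \<le> Q"
  obtains a b :: int and k k' k'' :: nat where "a > 0" "a * l3 + b * l4 = 1"
    "P = int k'' * l4 - a * l1" "Q = int k' * l4 - a * l2" "K = int k * l4"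
    "S = - int k'' * l3 - b * l1" "T = - int k' * l3 - b * l2" "U = - int k * l3"
    "P = 0 \<or> Q = 0 \<longrightarrow> l4 = 1"
proof -
  have l4: "l4 > 0"
    using order by linarith
  obtain a b where ab: "a > 0" "a * l3 + b * l4 = 1"
    using bezout_int_pos_coeff[OF coprime_of_weight_relations[OF gcd rel(1,2)] l4] .
  have nonneg_coeff: "0 \<le> j" if "X = j * l4 - a * l" "0 \<le> X" "0 \<le> l" for X j l
  proof -
    have "0 \<le> a * l"
      using ab(1) that(3) by simp
    then have "0 \<le> j * l4"
      using that(1,2) by linarith
    then show ?thesis
      using l4 by (simp add: zero_le_mult_iff)
  qed
  define j'' j' j where "j'' = b * P - a * S" and "j' = b * Q - a * T" and "j = b * K - a * U"
  have P: "P = j'' * l4 - a * l1" "S = - j'' * l3 - b * l1"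
    using bezout_coordinates[OF ab(2) rel(1)] by (simp_all add: j''_def)
  have Q: "Q = j' * l4 - a * l2" "T = - j' * l3 - b * l2"
    using bezout_coordinates[OF ab(2) rel(2)] by (simp_all add: j'_def)
  have K: "K = j * l4" "U = - j * l3"
    using bezout_coordinates[of a l3 b l4 0 K U] ab(2) rel(3) by (simp_all add: j_def)
  have j_nonneg: "0 \<le> j''" "0 \<le> j'" "0 \<le> j"
    using nonneg_coeff[OF P(1)] nonneg_coeff[OF Q(1)] nonneg_coeff[of K j 0] K(1) bounds order
    by simp_all
  have last: "l4 = 1" if "P = 0 \<or> Q = 0"
  proof (rule last_weight_eq_1[OF order gcd rel(1)])
    show "l4 dvd l1 \<or> l4 dvd l2"
      using that rel(1,2) by (metis add.right_neutral add_eq_0_iff2 dvd_minus_iff dvd_triv_left mult_zero_right)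
  qed
  show thesis
  proof (rule that[of a b "nat j''" "nat j'" "nat j"])
    show "P = 0 \<or> Q = 0 \<longrightarrow> l4 = 1"
      using last by blast
  qed (use ab P Q K j_nonneg in simp_all)
qed

theorem proposition3p1:
  fixes x1 x2 x3 x4 :: "int^3" and l1 l2 l3 l4 :: int
  assumes "fano_tetrahedron x1 x2 x3 x4"
    and "0 \<le> l1" and "l1 \<le> l2" and "l2 \<le> l3" and "l3 \<le> l4"
    and "gcd l1 (gcd l2 (gcd l3 l4)) = 1"
    and "l1 *s x1 + l2 *s x2 + l3 *s x3 + l4 *s x4 = 0"
  shows "\<exists>(g::int^3^3) (a::int) (b::int) (k::nat) (k'::nat) (k''::nat).
           invertible g \<and> a > 0 \<and> a * l3 + b * l4 = 1 \<and>
           0 \<le> int k'' * l4 - a * l1 \<and> int k'' * l4 - a * l1 < int k * l4 \<and>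
           0 \<le> int k' * l4 - a * l2 \<and> int k' * l4 - a * l2 < int k * l4 \<and>
           g *v x1 = vector [1, 0, 0] \<and>
           g *v x2 = vector [0, 1, 0] \<and>
           g *v x3 = vector [int k'' * l4 - a * l1, int k' * l4 - a * l2, int k * l4] \<and>
           g *v x4 = vector [- int k'' * l3 - b * l1, - int k' * l3 - b * l2, - int k * l3] \<and>
           ((int k'' * l4 - a * l1 = 0 \<or> int k' * l4 - a * l2 = 0) \<longrightarrow> l4 = 1)"
proof -
  obtain g :: "int^3^3" where g: "invertible g" "g *v x1 = vector [1, 0, 0]" "g *v x2 = vector [0, 1, 0]"
    "0 \<le> (g *v x3) $ 1" "(g *v x3) $ 1 < (g *v x3) $ 3" "0 \<le> (g *v x3) $ 2" "(g *v x3) $ 2 < (g *v x3) $ 3"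
    using fano_tetrahedron_unimodular_normal_form[OF assms(1)] by blast
  obtain a b k k' k'' where ab: "a > 0" "a * l3 + b * l4 = 1"
    and x3: "(g *v x3) $ 1 = int k'' * l4 - a * l1" "(g *v x3) $ 2 = int k' * l4 - a * l2"
      "(g *v x3) $ 3 = int k * l4"
    and x4: "(g *v x4) $ 1 = - int k'' * l3 - b * l1" "(g *v x4) $ 2 = - int k' * l3 - b * l2"
      "(g *v x4) $ 3 = - int k * l3"
    and last: "(g *v x3) $ 1 = 0 \<or> (g *v x3) $ 2 = 0 \<longrightarrow> l4 = 1"
    by (rule weight_normal_form[OF fano_first_weight_pos[OF assms] assms(3-6)
          coordinates_of_relation[OF g(2,3) assms(7)] g(4,5,6)])
  have "g *v x3 = vector [int k'' * l4 - a * l1, int k' * l4 - a * l2, int k * l4]"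
    "g *v x4 = vector [- int k'' * l3 - b * l1, - int k' * l3 - b * l2, - int k * l3]"
    using x3 x4 by (simp_all add: vec_eq_iff forall_3)
  with g(1-3) ab g(4-7)[unfolded x3] last[unfolded x3] show ?thesis
    by (intro exI[of _ g] exI[of _ a] exI[of _ b] exI[of _ k] exI[of _ k'] exI[of _ k''] conjI) simp_all
qed

end
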